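(* Let $\mathbf q\in\mathbb R^{2nK}_{\ge 0}$, $r\ge 0$ and $T\in\mathbb R$. For a feature index $k\in[p]$ define $$\mathrm{Prune}(k\mid\mathbf q,r)=\sum_{i\in[n]}\sum_{l\in\mathcal D_i}q_{il}\max\{x_{i,k},x_{l,k}\}^2+r\sqrt{\sum_{i\in[n]}\Big[\sum_{l\in\mathcal D_i}\max\{x_{i,k},x_{l,k}\}^4+\sum_{j\in\mathcal S_i}\max\{x_{i,k},x_{j,k}\}^4\Big]}.$$ If $\mathrm{Prune}(k\mid\mathbf q,r)\le T$, then for every descendant $k'\supseteq k$ of $k$, $$\mathbf C_{k',:}\mathbf q+r\|\mathbf C_{k',:}\|_2\le T.$$
   Context: Let $n,K,p\ge 1$ be integers and $[n]=\{1,\dots,n\}$. For each $i\in[n]$ let $\mathbf x_i=(x_{i,1},\dots,x_{i,p})^\top\in\mathbb R^p$ have nonnegative entries, and let $\mathcal D_i,\mathcal S_i\subseteq[n]$ be sets of size $K$ (indices of selected samples of a different class, resp. the same class, as sample $i$). For $i,j\in[n]$ put $\mathbf c_{ij}=(\mathbf x_i-\mathbf x_j)\circ(\mathbf x_i-\mathbf x_j)\in\mathbb R^p$, where $\circ$ is the entrywise product. Vectors in $\mathbb R^{2nK}$ are indexed by the $nK$ pairs $(i,l)$ with $i\in[n]$, $l\in\mathcal D_i$ ("different-class pairs") together with the $nK$ pairs $(i,j)$ with $i\in[n]$, $j\in\mathcal S_i$ ("same-class pairs"); so $\mathbf q$ has entries $q_{il}$ and $q_{ij}$. Let $\mathbf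 C\in\mathbb R^{p\times 2nK}$ be the matrix whose column for a different-class pair $(i,l)$ is $\mathbf c_{il}$ and whose column for a same-class pair $(i,j)$ is $-\mathbf c_{ij}$; $\mathbf C_{k,:}$ denotes its $k$-th row. The feature indices $[p]$ are nodes of a rooted tree (a graph-mining tree: feature $k$ is $x_{i,k}=g(\#(H_k\sqsubseteq G_i))$, where $H_k$ is a subgraph attached to node $k$, $G_i$ is the $i$-th input graph, $\#(H\sqsubseteq G)$ is the number of non-overlapping occurrences of $H$ in $G$, $g$ is nonnegative and nondecreasing, and each node's subgraph is a subgraph of its children's subgraphs). Write $k'\supseteq k$ if node $k'$ is a descendant of node $k$. The property used is: whenever $k'\supseteq k$, we have $0\le x_{i,k'}\le x_{i,k}$ for all $i\in[n]$. *)

theory Defs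
  imports "HOL-Analysis.Analysis"
begin

text \<open>Samples are indexed by {1..n}, features (tree nodes) by {1..p}.
  x i k is the k-th feature of sample i. D i / S i are the index sets of
  selected different-class / same-class samples for sample i.
  The vector q in R^(2nK) is given by two functions: qD i l for the
  different-class pair (i,l), l in D i, and qS i j for the same-class
  pair (i,j), j in S i.\<close>

definition cvec :: "(nat \<Rightarrow> nat \<Rightarrow> real) \<Rightarrow> nat \<Rightarrow> nat \<Rightarrow> nat \<Rightarrow> real" where
  "cvec x i j k = (x i k - x j k) * (x i k - x j k)"

definition Crow_q :: "nat \<Rightarrow> (nat \<Rightarrow> nat set) \<Rightarrow> (nat \<Rightarrow> nat set) \<Rightarrow> (nat \<Rightarrow> nat \<Rightarrow> real)
    \<Rightarrow> (nat \<Rightarrow> nat \<Rightarrow> real) \<Rightarrow> (nat \<Rightarrow> nat \<Rightarrow> real) \<Rightarrow> nat \<Rightarrow> real" where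
  "Crow_q n D S x qD qS k =
     (\<Sum>i\<in>{1..n}. (\<Sum>l\<in>D i. qD i l * cvec x i l k) + (\<Sum>j\<in>S i. qS i j * (- cvec x i j k)))"

definition Crow_norm :: "nat \<Rightarrow> (nat \<Rightarrow> nat set) \<Rightarrow> (nat \<Rightarrow> nat set) \<Rightarrow> (nat \<Rightarrow> nat \<Rightarrow> real)
    \<Rightarrow> nat \<Rightarrow> real" where
  "Crow_norm n D S x k =
     sqrt (\<Sum>i\<in>{1..n}. (\<Sum>l\<in>D i. (cvec x i l k)\<^sup>2) + (\<Sum>j\<in>S i. (- cvec x i j k)\<^sup>2))"

definition Prune :: "nat \<Rightarrow> (nat \<Rightarrow> nat set) \<Rightarrow> (nat \<Rightarrow> nat set) \<Rightarrow> (nat \<Rightarrow> nat \<Rightarrow> real)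
    \<Rightarrow> (nat \<Rightarrow> nat \<Rightarrow> real) \<Rightarrow> real \<Rightarrow> nat \<Rightarrow> real" where
  "Prune n D S x qD r k =
     (\<Sum>i\<in>{1..n}. \<Sum>l\<in>D i. qD i l * (max (x i k) (x l k))\<^sup>2)
     + r * sqrt (\<Sum>i\<in>{1..n}. (\<Sum>l\<in>D i. (max (x i k) (x l k)) ^ 4)
                               + (\<Sum>j\<in>S i. (max (x i k) (x j k)) ^ 4))"

definition rooted_tree :: "nat \<Rightarrow> (nat \<Rightarrow> nat) \<Rightarrow> nat \<Rightarrow> bool" where
  "rooted_tree p par rt \<longleftrightarrow> rt \<in> {1..p} \<and>
     (\<forall>k\<in>{1..p}. k \<noteq> rt \<longrightarrow> par k \<in> {1..p}) \<and>
     (\<forall>k\<in>{1..p}. \<exists>m. (par ^^ m) k = rt)"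

definition descendant :: "(nat \<Rightarrow> nat) \<Rightarrow> nat \<Rightarrow> nat \<Rightarrow> bool" where
  "descendant par k' k \<longleftrightarrow> (\<exists>m\<ge>1. (par ^^ m) k' = k)"

end

theory Submission
  imports Defs
begin

text \<open>Passing from a node k to a descendant k' shrinks every feature value while keeping it
  nonnegative, so |x i k' - x j k'| \<le> max (x i k) (x j k). Hence each different-class entry of
  row k' of C is at most the corresponding max squared, each same-class entry is nonpositive (and
  is weighted by a nonnegative q), and each squared entry is at most the fourth power of the max.
  Summing these bounds dominates C_{k',:} q by the first term of Prune and ||C_{k',:}|| by the
  square root in Prune.\<close>

lemma abs_diff_le_max:
  fixes a b a' b' :: "'a::linordered_idom"
  assumes "0 \<le> a'" "a' \<le> a" "0 \<le> b'" "b' \<le> b"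
  shows "\<bar>a' - b'\<bar> \<le> max a b"
  using assms by (simp add: abs_if max_def)

lemma cvec_nonneg: "0 \<le> cvec x i j k"
  unfolding cvec_def by simp

lemma cvec_le_max_square:
  assumes "0 \<le> x i k'" "x i k' \<le> x i k" "0 \<le> x j k'" "x j k' \<le> x j k"
  shows "cvec x i j k' \<le> (max (x i k) (x j k))\<^sup>2"
proof -
  have "\<bar>x i k' - x j k'\<bar>\<^sup>2 \<le> (max (x i k) (x j k))\<^sup>2"
    using abs_diff_le_max[OF assms] by (intro power_mono) auto
  then show ?thesis
    unfolding cvec_def by (simp add: power2_eq_square)
qed

lemma cvec_square_le_max_pow4:
  assumes "0 \<le> x i k'" "x i k' \<le> x i k" "0 \<le> x j k'" "x j k' \<le> x j k"
  shows "(cvec x i j k')\<^sup>2 \<le> (max (x i k) (x j k)) ^ 4"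
proof -
  have "(cvec x i j k')\<^sup>2 \<le> ((max (x i k) (x j k))\<^sup>2)\<^sup>2"
    using cvec_le_max_square[OF assms] cvec_nonneg by (intro power_mono)
  then show ?thesis
    by (simp flip: power_mult)
qed

context
  fixes n :: nat and D S :: "nat \<Rightarrow> nat set" and x :: "nat \<Rightarrow> nat \<Rightarrow> real" and k k' :: nat
  assumes D_sub: "\<And>i. i \<in> {1..n} \<Longrightarrow> D i \<subseteq> {1..n}"
    and S_sub: "\<And>i. i \<in> {1..n} \<Longrightarrow> S i \<subseteq> {1..n}"
    and dominated: "\<And>i. i \<in> {1..n} \<Longrightarrow> 0 \<le> x i k' \<and> x i k' \<le> x i k"
begin

lemma Crow_q_le_Prune_sum:
  assumes qD_nonneg: "\<And>i l. i \<in> {1..n} \<Longrightarrow> l \<in> D i \<Longrightarrow> 0 \<le> qD i l"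
    and qS_nonneg: "\<And>i j. i \<in> {1..n} \<Longrightarrow> j \<in> S i \<Longrightarrow> 0 \<le> qS i j"
  shows "Crow_q n D S x qD qS k' \<le> (\<Sum>i\<in>{1..n}. \<Sum>l\<in>D i. qD i l * (max (x i k) (x l k))\<^sup>2)"
  unfolding Crow_q_def
proof (rule sum_mono)
  fix i assume i: "i \<in> {1..n}"
  have "(\<Sum>l\<in>D i. qD i l * cvec x i l k') \<le> (\<Sum>l\<in>D i. qD i l * (max (x i k) (x l k))\<^sup>2)"
  proof (rule sum_mono)
    fix l assume l: "l \<in> D i"
    with D_sub[OF i] have "l \<in> {1..n}" by blast
    then have "cvec x i l k' \<le> (max (x i k) (x l k))\<^sup>2"
      using dominated i by (intro cvec_le_max_square) auto
    then show "qD i l * cvec x i l k' \<le> qD i l * (max (x i k) (x l k))\<^sup>2"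
      using qD_nonneg[OF i l] by (rule mult_left_mono)
  qed
  moreover have "(\<Sum>j\<in>S i. qS i j * (- cvec x i j k')) \<le> 0"
    using qS_nonneg[OF i] cvec_nonneg by (intro sum_nonpos) (simp add: mult_nonneg_nonpos)
  ultimately show "(\<Sum>l\<in>D i. qD i l * cvec x i l k') + (\<Sum>j\<in>S i. qS i j * (- cvec x i j k'))
      \<le> (\<Sum>l\<in>D i. qD i l * (max (x i k) (x l k))\<^sup>2)"
    by linarith
qed

lemma Crow_norm_le_Prune_sqrt:
  "Crow_norm n D S x k' \<le> sqrt (\<Sum>i\<in>{1..n}. (\<Sum>l\<in>D i. (max (x i k) (x l k)) ^ 4)
                                         + (\<Sum>j\<in>S i. (max (x i k) (x j k)) ^ 4))"
  unfolding Crow_norm_def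
proof (intro real_sqrt_le_mono sum_mono add_mono)
  fix i l assume i: "i \<in> {1..n}" and l: "l \<in> D i"
  with D_sub[OF i] have "l \<in> {1..n}" by blast
  then show "(cvec x i l k')\<^sup>2 \<le> (max (x i k) (x l k)) ^ 4"
    using dominated i by (intro cvec_square_le_max_pow4) auto
next
  fix i j assume i: "i \<in> {1..n}" and j: "j \<in> S i"
  with S_sub[OF i] have "j \<in> {1..n}" by blast
  then show "(- cvec x i j k')\<^sup>2 \<le> (max (x i k) (x j k)) ^ 4"
    using dominated i by (simp add: cvec_square_le_max_pow4)
qed

lemma Crow_bound_le_Prune:
  assumes "\<And>i l. i \<in> {1..n} \<Longrightarrow> l \<in> D i \<Longrightarrow> 0 \<le> qD i l"
    and "\<And>i j. i \<in> {1..n} \<Longrightarrow> j \<in> S i \<Longrightarrow> 0 \<le> qS i j"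
    and "0 \<le> r"
  shows "Crow_q n D S x qD qS k' + r * Crow_norm n D S x k' \<le> Prune n D S x qD r k"
  unfolding Prune_def
  using Crow_q_le_Prune_sum[OF assms(1,2)] mult_left_mono[OF Crow_norm_le_Prune_sqrt \<open>0 \<le> r\<close>]
  by (rule add_mono)

end

theorem lemma1:
  fixes n K p :: nat and x :: "nat \<Rightarrow> nat \<Rightarrow> real"
    and D S :: "nat \<Rightarrow> nat set" and qD qS :: "nat \<Rightarrow> nat \<Rightarrow> real"
    and r T :: real and par :: "nat \<Rightarrow> nat" and rt k k' :: nat
  assumes "n \<ge> 1" and "K \<ge> 1" and "p \<ge> 1"
    and x_nonneg: "\<And>i k. i \<in> {1..n} \<Longrightarrow> k \<in> {1..p} \<Longrightarrow> 0 \<le> x i k"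
    and D: "\<And>i. i \<in> {1..n} \<Longrightarrow> D i \<subseteq> {1..n} \<and> card (D i) = K"
    and S: "\<And>i. i \<in> {1..n} \<Longrightarrow> S i \<subseteq> {1..n} \<and> card (S i) = K"
    and tree: "rooted_tree p par rt"
    and mono: "\<And>k k' i. k \<in> {1..p} \<Longrightarrow> k' \<in> {1..p} \<Longrightarrow> descendant par k' k \<Longrightarrow>
                  i \<in> {1..n} \<Longrightarrow> 0 \<le> x i k' \<and> x i k' \<le> x i k"
    and qD_nonneg: "\<And>i l. i \<in> {1..n} \<Longrightarrow> l \<in> D i \<Longrightarrow> 0 \<le> qD i l"
    and qS_nonneg: "\<And>i j. i \<in> {1..n} \<Longrightarrow> j \<in> S i \<Longrightarrow> 0 \<le> qS i j"
    and "r \<ge> 0"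
    and k: "k \<in> {1..p}" and k': "k' \<in> {1..p}" and desc: "descendant par k' k"
    and prune: "Prune n D S x qD r k \<le> T"
  shows "Crow_q n D S x qD qS k' + r * Crow_norm n D S x k' \<le> T"
proof -
  have "Crow_q n D S x qD qS k' + r * Crow_norm n D S x k' \<le> Prune n D S x qD r k"
  proof (rule Crow_bound_le_Prune)
    show "\<And>i. i \<in> {1..n} \<Longrightarrow> D i \<subseteq> {1..n}" "\<And>i. i \<in> {1..n} \<Longrightarrow> S i \<subseteq> {1..n}"
      using D S by blast+
    show "\<And>i. i \<in> {1..n} \<Longrightarrow> 0 \<le> x i k' \<and> x i k' \<le> x i k"
      using mono[OF k k' desc] .
  qed (use qD_nonneg qS_nonneg \<open>r \<ge> 0\<close> in auto)
  with prune show ?thesis by linarith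
qed

end
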